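(* Let $g\in\mathcal{P}(\mathbb{R})$ be symmetric around $0$, let $\beta,\sigma>0$ and $\gamma:=\beta+\sigma^2/2$. Then for every $\lambda\in(0,\sigma^2/2)$, $$\|L\|^\infty_\lambda\le\frac{1}{(\gamma+\lambda)(\sigma^2-2\lambda)}.$$ In particular, if $\kappa<\gamma\sigma^2$, then there exists $\lambda>0$ small enough such that $I-\kappa L$ is invertible as a bounded linear operator from $L^\infty_\lambda$ to $L^\infty_\lambda$.
   Context: For $\lambda>0$, $L^\infty_\lambda$ is the space of measurable $k:\mathbb{R}_+\to\mathbb{R}$ with $\|k\|^\infty_\lambda:=\operatorname{esssup}_{t\ge0}|k(t)|e^{\lambda t}<\infty$, and $\|L\|^\infty_\lambda:=\sup\{\|Lk\|^\infty_\lambda:\|k\|^\infty_\lambda=1\}$. The operator $L$ is $(Lk)(t)=\frac12\int_0^t\int_\theta^\infty e^{-\frac{\sigma^2}{2}(t-\theta)}e^{-\gamma(u-\theta)}\int_{\mathbb{R}}g(\mathrm{d}\omega)\,k(u)\cos(\omega(t-u))\,\mathrm{d}u\,\mathrm{d}\theta$, $t\ge0$. *)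

theory Defs
  imports "HOL-Probability.Probability"
begin

definition halfline :: "real measure" where
  "halfline = restrict_space lborel {0..}"

text \<open>Weighted sup-norm: esssup over t >= 0 of |k t| * exp(lambda t) (extended real;
  it is infinite for non-measurable k, by the library convention for esssup).\<close>
definition wnorm :: "real \<Rightarrow> (real \<Rightarrow> real) \<Rightarrow> ereal" where
  "wnorm lam k = esssup halfline (\<lambda>t. ereal (\<bar>k t\<bar> * exp (lam * t)))"

definition Linf :: "real \<Rightarrow> (real \<Rightarrow> real) set" where
  "Linf lam = {k. k \<in> borel_measurable halfline \<and> wnorm lam k < \<infinity>}"

definition Lop :: "real measure \<Rightarrow> real \<Rightarrow> real \<Rightarrow> (real \<Rightarrow> real) \<Rightarrow> real \<Rightarrow> real" where
  "Lop g sig gam k t =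
     (1/2) * (LINT \<theta>:{0..t}|lborel.
        (LINT u:{\<theta>..}|lborel.
           exp (- (sig\<^sup>2 / 2) * (t - \<theta>)) * exp (- gam * (u - \<theta>))
           * (LINT \<omega>|g. k u * cos (\<omega> * (t - u)))))"

definition Lnorm :: "real measure \<Rightarrow> real \<Rightarrow> real \<Rightarrow> real \<Rightarrow> ereal" where
  "Lnorm g sig gam lam =
     Sup {wnorm lam (Lop g sig gam k) | k. k \<in> Linf lam \<and> wnorm lam k = 1}"

definition ae_eq :: "(real \<Rightarrow> real) \<Rightarrow> (real \<Rightarrow> real) \<Rightarrow> bool" where
  "ae_eq f h \<longleftrightarrow> (AE t in halfline. f t = h t)"

text \<open>An operator T (acting on representatives, compatible with a.e. equality) is invertible
  as a bounded linear operator on L^infty_lambda: it maps L^infty_lambda into itself boundedly,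
  and there is a bounded operator M on L^infty_lambda, well defined on a.e.-classes,
  which is a two-sided inverse modulo a.e. equality.\<close>
definition bounded_invertible_on :: "real \<Rightarrow> ((real \<Rightarrow> real) \<Rightarrow> (real \<Rightarrow> real)) \<Rightarrow> bool" where
  "bounded_invertible_on lam T \<longleftrightarrow>
     (\<exists>C::real. \<forall>k\<in>Linf lam. T k \<in> Linf lam \<and> wnorm lam (T k) \<le> ereal C * wnorm lam k) \<and>
     (\<exists>M C. (\<forall>h\<in>Linf lam. M h \<in> Linf lam \<and> wnorm lam (M h) \<le> ereal C * wnorm lam h) \<and>
            (\<forall>h1\<in>Linf lam. \<forall>h2\<in>Linf lam. ae_eq h1 h2 \<longrightarrow> ae_eq (M h1) (M h2)) \<and>
            (\<forall>h\<in>Linf lam. ae_eq (T (M h)) h) \<and>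
            (\<forall>k\<in>Linf lam. ae_eq (M (T k)) k))"

end

theory Submission
  imports Defs
begin

(* If |k u| <= c exp (- lam u) for u >= 0, then, since the cosine transform of g is bounded by 1,
   the inner integral over u in [theta, infinity) is at most c exp (- lam theta) / (gam + lam);
   integrating the factor exp (- (sig^2/2) (t - theta)) over theta in [0, t] and taking the
   prefactor 1/2 into account gives |L k t| <= c exp (- lam t) / ((gam + lam) (sig^2 - 2 lam)),
   which is the norm bound.
   As lam -> 0 this constant tends to 1 / (gam sig^2), so for kappa < gam sig^2 some lam > 0 gives
   kappa ||L|| < 1, and I - kappa L is inverted by the Neumann series sum kappa^n L^n. The series
   converges in the weighted sup norm, which is what allows L to be applied to it termwise. *)

section \<open>Weighted sup bounds on the half line\<close>

lemma times_exp_le_iff: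
  fixes x b lam t :: real
  shows "x * exp (lam * t) \<le> b \<longleftrightarrow> x \<le> b * exp (- lam * t)"
proof -
  have "b * exp (- lam * t) = b / exp (lam * t)"
    by (simp add: exp_minus divide_inverse)
  then show ?thesis by (simp add: pos_le_divide_eq)
qed

lemma space_halfline: "space halfline = {0..}"
  by (simp add: halfline_def space_restrict_space)

lemma AE_halfline_iff: "(AE t in halfline. P t) \<longleftrightarrow> (AE t in lborel. 0 \<le> t \<longrightarrow> P t)"
  unfolding halfline_def by (subst AE_restrict_space_iff) auto

lemma ae_filter_halfline_nontrivial: "ae_filter halfline \<noteq> bot"
proof -
  have "emeasure lborel {0::real..1} \<le> emeasure lborel {0::real..}"
    by (intro emeasure_mono) auto
  then have "emeasure halfline (space halfline) \<noteq> 0"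
    unfolding halfline_def by (auto simp: emeasure_restrict_space space_restrict_space)
  then show ?thesis by (simp add: ae_filter_eq_bot_iff)
qed

lemma borel_measurable_halfline_id: "(\<lambda>t. t) \<in> borel_measurable halfline"
  unfolding halfline_def by (intro measurable_restrict_space1) simp

definition wbounded :: "real \<Rightarrow> (real \<Rightarrow> real) \<Rightarrow> real \<Rightarrow> bool" where
  "wbounded lam k c \<longleftrightarrow>
     k \<in> borel_measurable halfline \<and> (AE t in halfline. \<bar>k t\<bar> * exp (lam * t) \<le> c)"

lemma wbounded_nonneg: "wbounded lam k c \<Longrightarrow> 0 \<le> c"
  unfolding wbounded_def
  by (auto dest!: eventually_happens'[OF ae_filter_halfline_nontrivial] intro: order_trans[rotated])

lemma wbounded_zero: "wbounded lam (\<lambda>t. 0) 0"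
  by (simp add: wbounded_def)

lemma wbounded_add:
  assumes "wbounded lam k1 c1" "wbounded lam k2 c2"
  shows "wbounded lam (\<lambda>t. k1 t + k2 t) (c1 + c2)"
  unfolding wbounded_def
proof
  show "(\<lambda>t. k1 t + k2 t) \<in> borel_measurable halfline"
    using assms unfolding wbounded_def by (intro borel_measurable_add) auto
  have "AE t in halfline. \<bar>k1 t\<bar> * exp (lam * t) \<le> c1" "AE t in halfline. \<bar>k2 t\<bar> * exp (lam * t) \<le> c2"
    using assms by (simp_all add: wbounded_def)
  then show "AE t in halfline. \<bar>k1 t + k2 t\<bar> * exp (lam * t) \<le> c1 + c2"
  proof eventually_elim
    case (elim t)
    have "\<bar>k1 t + k2 t\<bar> * exp (lam * t) \<le> \<bar>k1 t\<bar> * exp (lam * t) + \<bar>k2 t\<bar> * exp (lam * t)"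
      by (metis abs_triangle_ineq distrib_right exp_ge_zero mult_right_mono)
    with elim show ?case by simp
  qed
qed

lemma wbounded_scale:
  assumes "wbounded lam k c"
  shows "wbounded lam (\<lambda>t. r * k t) (\<bar>r\<bar> * c)"
  using assms unfolding wbounded_def
  by (auto simp: abs_mult mult.assoc elim!: eventually_mono intro: mult_left_mono)

lemma wbounded_diff:
  assumes "wbounded lam k1 c1" "wbounded lam k2 c2"
  shows "wbounded lam (\<lambda>t. k1 t - k2 t) (c1 + c2)"
  using wbounded_add[OF assms(1) wbounded_scale[OF assms(2), of "- 1"]] by simp

lemma wbounded_sum:
  fixes N :: nat
  assumes "\<And>n. wbounded lam (f n) (b n)"
  shows "wbounded lam (\<lambda>t. \<Sum>n<N. f n t) (\<Sum>n<N. b n)"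
proof (induction N)
  case 0
  then show ?case by (simp add: wbounded_zero)
next
  case (Suc N)
  then show ?case by (simp add: wbounded_add assms)
qed

lemma wbounded_suminf_remainder:
  assumes f: "\<And>n. wbounded lam (f n) (b n)" and b: "summable b"
  shows "wbounded lam (\<lambda>t. (\<Sum>n. f n t) - (\<Sum>n<N. f n t)) (\<Sum>n. b (n + N))"
  unfolding wbounded_def
proof
  have [measurable]: "f n \<in> borel_measurable halfline" for n
    using f by (simp add: wbounded_def)
  show "(\<lambda>t. (\<Sum>n. f n t) - (\<Sum>n<N. f n t)) \<in> borel_measurable halfline"
    by measurable
  have "AE t in halfline. \<forall>n. \<bar>f n t\<bar> * exp (lam * t) \<le> b n"
    using f by (simp add: wbounded_def AE_all_countable)
  then show "AE t in halfline. \<bar>(\<Sum>n. f n t) - (\<Sum>n<N. f n t)\<bar> * exp (lam * t) \<le> (\<Sum>n. b (n + N))"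
  proof eventually_elim
    case (elim t)
    then have bound: "norm (f n t) \<le> b n * exp (- lam * t)" for n
      by (simp add: times_exp_le_iff)
    have "summable (\<lambda>n. b n * exp (- lam * t))"
      using b by (rule summable_mult2)
    then have "summable (\<lambda>n. f n t)"
      by (rule summable_comparison_test') (rule bound)
    then have "(\<Sum>n. f n t) - (\<Sum>n<N. f n t) = (\<Sum>n. f (n + N) t)"
      by (rule suminf_minus_initial_segment[symmetric])
    also have "\<bar>\<dots>\<bar> \<le> (\<Sum>n. b (n + N) * exp (- lam * t))"
      using norm_suminf_le[of "\<lambda>n. f (n + N) t" "\<lambda>n. b (n + N) * exp (- lam * t)"] bound b
      by (simp add: summable_mult2)
    also have "\<dots> = (\<Sum>n. b (n + N)) * exp (- lam * t)"
      using b by (intro suminf_mult2[symmetric]) simp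
    finally show ?case
      by (simp add: times_exp_le_iff)
  qed
qed

lemma wbounded_suminf:
  assumes "\<And>n. wbounded lam (f n) (b n)" "summable b"
  shows "wbounded lam (\<lambda>t. \<Sum>n. f n t) (\<Sum>n. b n)"
  using wbounded_suminf_remainder[OF assms, of 0] by simp

lemma wnorm_nonneg: "0 \<le> wnorm lam k"
proof (cases "(\<lambda>t. ereal (\<bar>k t\<bar> * exp (lam * t))) \<in> borel_measurable halfline")
  case True
  have "ereal 0 = esssup halfline (\<lambda>t. ereal 0)"
    using ae_filter_halfline_nontrivial by (simp add: esssup_const ae_filter_eq_bot_iff)
  also have "\<dots> \<le> wnorm lam k"
    unfolding wnorm_def by (rule esssup_mono) auto
  finally show ?thesis by (simp add: zero_ereal_def)
next
  case False
  then show ?thesis by (simp add: wnorm_def esssup_non_measurable)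
qed

lemma wnorm_le_wbounded:
  assumes "wbounded lam k c"
  shows "wnorm lam k \<le> ereal c"
  unfolding wnorm_def
proof (rule esssup_I)
  note borel_measurable_halfline_id[measurable]
  have [measurable]: "k \<in> borel_measurable halfline"
    using assms by (simp add: wbounded_def)
  show "(\<lambda>t. ereal (\<bar>k t\<bar> * exp (lam * t))) \<in> borel_measurable halfline"
    by measurable
  show "AE t in halfline. ereal (\<bar>k t\<bar> * exp (lam * t)) \<le> ereal c"
    using assms by (simp add: wbounded_def)
qed

lemma wbounded_imp_Linf: "wbounded lam k c \<Longrightarrow> k \<in> Linf lam"
  unfolding Linf_def using wnorm_le_wbounded[of lam k c]
  by (auto simp: wbounded_def intro: le_less_trans)

lemma Linf_wboundedE:
  assumes "k \<in> Linf lam"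
  obtains c where "wnorm lam k = ereal c" "wbounded lam k c"
proof -
  obtain c where c: "wnorm lam k = ereal c"
    using wnorm_nonneg[of lam k] assms by (cases "wnorm lam k") (auto simp: Linf_def)
  have "AE t in halfline. ereal (\<bar>k t\<bar> * exp (lam * t)) \<le> wnorm lam k"
    unfolding wnorm_def by (rule esssup_AE)
  then have "wbounded lam k c"
    using assms by (simp add: wbounded_def Linf_def c)
  with c show ?thesis by (rule that)
qed

section \<open>Neumann series for operators bounded in the weighted sup norm\<close>

(* Linearity is only required on wbounded arguments: for Lop it rests on additivity of
   Lebesgue integrals, which needs integrability. *)
locale weighted_bounded_operator =
  fixes lam K :: real and L :: "(real \<Rightarrow> real) \<Rightarrow> real \<Rightarrow> real"
  assumes K_nonneg: "0 \<le> K"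
    and L_cong_nonneg: "(\<And>u. 0 \<le> u \<Longrightarrow> k1 u = k2 u) \<Longrightarrow> 0 \<le> t \<Longrightarrow> L k1 t = L k2 t"
    and L_scale: "0 \<le> t \<Longrightarrow> L (\<lambda>u. r * k u) t = r * L k t"
    and L_add: "wbounded lam k1 c1 \<Longrightarrow> wbounded lam k2 c2 \<Longrightarrow> 0 \<le> t \<Longrightarrow>
      L (\<lambda>u. k1 u + k2 u) t = L k1 t + L k2 t"
    and abs_L_le: "wbounded lam k c \<Longrightarrow> 0 \<le> t \<Longrightarrow> \<bar>L k t\<bar> * exp (lam * t) \<le> K * c"
    and L_measurable: "wbounded lam k c \<Longrightarrow> L k \<in> borel_measurable halfline"
begin

lemma wbounded_L:
  assumes "wbounded lam k c"
  shows "wbounded lam (L k) (K * c)"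
  unfolding wbounded_def[of _ "L k"]
proof
  show "L k \<in> borel_measurable halfline"
    by (rule L_measurable[OF assms])
  show "AE t in halfline. \<bar>L k t\<bar> * exp (lam * t) \<le> K * c"
    by (rule AE_I2) (simp add: space_halfline abs_L_le[OF assms])
qed

lemma opnorm_L_le: "Sup {wnorm lam (L k) |k. k \<in> Linf lam \<and> wnorm lam k = 1} \<le> ereal K"
proof (rule Sup_least, clarify)
  fix k assume k: "k \<in> Linf lam" "wnorm lam k = 1"
  then obtain c where "wnorm lam k = ereal c" "wbounded lam k c"
    by (elim Linf_wboundedE)
  with k(2) have k1: "wbounded lam k 1"
    by (simp add: one_ereal_def)
  show "wnorm lam (L k) \<le> ereal K"
    using wnorm_le_wbounded[OF wbounded_L[OF k1]] by simp
qed

lemma L_zero: "0 \<le> t \<Longrightarrow> L (\<lambda>u. 0) t = 0"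
  using L_scale[of t 0] by simp

lemma L_diff:
  assumes "wbounded lam k1 c1" "wbounded lam k2 c2" "0 \<le> t"
  shows "L (\<lambda>u. k1 u - k2 u) t = L k1 t - L k2 t"
  using L_add[OF assms(1) wbounded_scale[OF assms(2), of "- 1"] assms(3)] L_scale[OF assms(3), of "- 1"]
  by simp

lemma L_ae_cong:
  assumes h1: "wbounded lam h1 c1" and h2: "wbounded lam h2 c2"
    and eq: "AE u in halfline. h1 u = h2 u" and t: "0 \<le> t"
  shows "L h1 t = L h2 t"
proof -
  have d: "wbounded lam (\<lambda>u. h1 u - h2 u) 0"
    using wbounded_diff[OF h1 h2] eq by (auto simp: wbounded_def elim: eventually_mono)
  have "\<bar>L (\<lambda>u. h1 u - h2 u) t\<bar> * exp (lam * t) \<le> 0"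
    using abs_L_le[OF d t] by simp
  then show ?thesis
    using L_diff[OF h1 h2 t] by (simp add: mult_le_0_iff)
qed

lemma L_sum:
  fixes N :: nat
  assumes f: "\<And>n. wbounded lam (f n) (b n)" and t: "0 \<le> t"
  shows "L (\<lambda>u. \<Sum>n<N. f n u) t = (\<Sum>n<N. L (f n) t)"
proof (induction N)
  case 0
  then show ?case by (simp add: L_zero[OF t])
next
  case (Suc N)
  have partial: "wbounded lam (\<lambda>u. \<Sum>n<N. f n u) (\<Sum>n<N. b n)"
    by (rule wbounded_sum[of lam f b, OF f])
  show ?case
    using L_add[OF partial f[of N] t] Suc by simp
qed

lemma L_sums:
  assumes f: "\<And>n. wbounded lam (f n) (b n)" and b: "summable b" and t: "0 \<le> t"
  shows "(\<lambda>n. L (f n) t) sums L (\<lambda>u. \<Sum>n. f n u) t"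
proof -
  define F where "F = (\<lambda>u. \<Sum>n. f n u)"
  define S where "S N = (\<lambda>u. \<Sum>n<N. f n u)" for N
  have F: "wbounded lam F (\<Sum>n. b n)"
    unfolding F_def by (rule wbounded_suminf[of lam f b, OF f b])
  have S: "wbounded lam (S N) (\<Sum>n<N. b n)" for N
    unfolding S_def by (rule wbounded_sum[of lam f b, OF f])
  have remainder: "wbounded lam (\<lambda>u. F u - S N u) (\<Sum>n. b (n + N))" for N
    unfolding F_def S_def by (rule wbounded_suminf_remainder[of lam f b, OF f b])
  have "L F t - (\<Sum>n<N. L (f n) t) = L (\<lambda>u. F u - S N u) t" for N
    using L_diff[OF F S t, of N] L_sum[of f b t N, OF f t] by (simp add: S_def)
  then have bound: "norm (L F t - (\<Sum>n<N. L (f n) t)) \<le> K * (\<Sum>n. b (n + N)) * exp (- lam * t)" for N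
    using abs_L_le[OF remainder t, of N] by (simp add: times_exp_le_iff)
  have "(\<lambda>N. K * (\<Sum>n. b (n + N)) * exp (- lam * t)) \<longlonglongrightarrow> 0"
    by (rule tendsto_mult_left_zero[OF tendsto_mult_right_zero[OF suminf_exist_split2[OF b]]])
  then have "(\<lambda>N. L F t - (\<Sum>n<N. L (f n) t)) \<longlonglongrightarrow> 0"
    by (rule Lim_null_comparison[OF always_eventually[OF allI[OF bound]]])
  from tendsto_diff[OF tendsto_const[of "L F t"] this] have "(\<lambda>N. \<Sum>n<N. L (f n) t) \<longlonglongrightarrow> L F t"
    by simp
  then show ?thesis
    by (simp add: sums_def F_def)
qed

lemma wbounded_funpow_L: "wbounded lam h c \<Longrightarrow> wbounded lam ((L ^^ n) h) (K ^ n * c)"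
proof (induction n)
  case 0
  then show ?case by simp
next
  case (Suc n)
  then show ?case
    using wbounded_L[of "(L ^^ n) h" "K ^ n * c"] by (simp add: mult.assoc)
qed

lemma funpow_L_cong_nonneg:
  assumes "\<And>u. 0 \<le> u \<Longrightarrow> k1 u = k2 u" "0 \<le> t"
  shows "(L ^^ n) k1 t = (L ^^ n) k2 t"
  using assms(2)
proof (induction n arbitrary: t)
  case 0
  then show ?case using assms(1) by simp
next
  case (Suc n)
  then show ?case by (auto intro: L_cong_nonneg)
qed

lemma abs_funpow_L_Suc_le:
  assumes "wbounded lam h c" "0 \<le> t"
  shows "\<bar>(L ^^ Suc n) h t\<bar> \<le> K ^ Suc n * c * exp (- lam * t)"
  using abs_L_le[OF wbounded_funpow_L[OF assms(1), of n] assms(2)]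
  by (simp add: times_exp_le_iff mult.assoc)

end

locale neumann_series = weighted_bounded_operator +
  fixes kap :: real
  assumes kap_nonneg: "0 \<le> kap" and kap_K_less_1: "kap * K < 1"
begin

definition neumann_sum :: "(real \<Rightarrow> real) \<Rightarrow> real \<Rightarrow> real" where
  "neumann_sum h t = (\<Sum>n. kap ^ n * (L ^^ n) h t)"

lemma wbounded_neumann_term:
  assumes "wbounded lam h c"
  shows "wbounded lam (\<lambda>t. kap ^ n * (L ^^ n) h t) ((kap * K) ^ n * c)"
  using wbounded_scale[OF wbounded_funpow_L[OF assms, of n], of "kap ^ n"] kap_nonneg
  by (simp add: power_mult_distrib mult.assoc)

lemma summable_geometric_bound: "summable (\<lambda>n. (kap * K) ^ n * c)"
  using kap_nonneg K_nonneg kap_K_less_1 by (intro summable_mult2 summable_geometric) simp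

lemma wbounded_neumann_sum:
  assumes "wbounded lam h c"
  shows "wbounded lam (neumann_sum h) (c / (1 - kap * K))"
proof -
  have "wbounded lam (\<lambda>t. \<Sum>n. kap ^ n * (L ^^ n) h t) (\<Sum>n. (kap * K) ^ n * c)"
    by (rule wbounded_suminf[of lam "\<lambda>n t. kap ^ n * (L ^^ n) h t" "\<lambda>n. (kap * K) ^ n * c",
          OF wbounded_neumann_term[OF assms] summable_geometric_bound])
  moreover have "(\<Sum>n. (kap * K) ^ n * c) = c / (1 - kap * K)"
    using kap_nonneg K_nonneg kap_K_less_1
    by (simp add: suminf_mult2[symmetric] suminf_geometric summable_geometric)
  ultimately show ?thesis
    unfolding neumann_sum_def[abs_def] by simp
qed

lemma neumann_sum_ae_cong:
  assumes h1: "wbounded lam h1 c1" and h2: "wbounded lam h2 c2"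
    and eq: "AE t in halfline. h1 t = h2 t"
  shows "AE t in halfline. neumann_sum h1 t = neumann_sum h2 t"
proof -
  have "AE t in halfline. 0 \<le> t"
    by (rule AE_I2) (simp add: space_halfline)
  with eq show ?thesis
  proof eventually_elim
    case (elim t)
    have "(L ^^ n) h1 t = (L ^^ n) h2 t" for n
    proof (cases n)
      case 0
      then show ?thesis using elim by simp
    next
      case (Suc m)
      have "(L ^^ m) (L h1) t = (L ^^ m) (L h2) t"
        using L_ae_cong[OF h1 h2 eq] elim by (intro funpow_L_cong_nonneg) auto
      then show ?thesis
        by (simp add: Suc funpow_Suc_right del: funpow.simps)
    qed
    then show ?case
      by (simp add: neumann_sum_def)
  qed
qed

lemma neumann_sum_right_inverse:
  assumes h: "wbounded lam h c" and t: "0 \<le> t"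
  shows "neumann_sum h t - kap * L (neumann_sum h) t = h t"
proof -
  define a where "a = (\<lambda>n. kap ^ n * (L ^^ n) h t)"
  have "(\<lambda>n. L (\<lambda>u. kap ^ n * (L ^^ n) h u) t) sums L (neumann_sum h) t"
    unfolding neumann_sum_def[abs_def]
    by (rule L_sums[of "\<lambda>n u. kap ^ n * (L ^^ n) h u" "\<lambda>n. (kap * K) ^ n * c",
          OF wbounded_neumann_term[OF h] summable_geometric_bound t])
  moreover have "a (Suc n) = kap * L (\<lambda>u. kap ^ n * (L ^^ n) h u) t" for n
    by (simp add: a_def L_scale[OF t])
  ultimately have "(\<lambda>n. a (Suc n)) sums (kap * L (neumann_sum h) t)"
    by (simp add: sums_mult)
  then have "a sums (kap * L (neumann_sum h) t + a 0)"
    by (rule sums_Suc_iff[THEN iffD1])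
  then show ?thesis
    by (simp add: neumann_sum_def a_def sums_iff)
qed

lemma funpow_L_one_minus_kap_L:
  assumes k: "wbounded lam k c" and t: "0 \<le> t"
  shows "(L ^^ n) (\<lambda>u. k u - kap * L k u) t = (L ^^ n) k t - kap * (L ^^ Suc n) k t"
  using t
proof (induction n arbitrary: t)
  case 0
  then show ?case by simp
next
  case (Suc n)
  have "(L ^^ Suc n) (\<lambda>u. k u - kap * L k u) t = L (\<lambda>u. (L ^^ n) k u - kap * (L ^^ Suc n) k u) t"
    using Suc by (auto intro: L_cong_nonneg)
  also have "\<dots> = (L ^^ Suc n) k t - L (\<lambda>u. kap * (L ^^ Suc n) k u) t"
    using L_diff[OF wbounded_funpow_L[OF k, of n] wbounded_scale[OF wbounded_funpow_L[OF k, of "Suc n"], of kap] Suc.prems]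
    by simp
  also have "\<dots> = (L ^^ Suc n) k t - kap * (L ^^ Suc (Suc n)) k t"
    using L_scale[OF Suc.prems] by simp
  finally show ?case .
qed

lemma neumann_sum_left_inverse:
  assumes k: "wbounded lam k c" and t: "0 \<le> t"
  shows "neumann_sum (\<lambda>u. k u - kap * L k u) t = k t"
proof -
  define a where "a n = kap ^ n * (L ^^ n) k t" for n
  have "norm (a (Suc n)) \<le> (kap * K) ^ n * (kap * K * c * exp (- lam * t))" for n
  proof -
    have "norm (a (Suc n)) = kap ^ Suc n * \<bar>(L ^^ Suc n) k t\<bar>"
      using kap_nonneg by (simp add: a_def abs_mult)
    also have "\<dots> \<le> kap ^ Suc n * (K ^ Suc n * c * exp (- lam * t))"
      using abs_funpow_L_Suc_le[OF k t] kap_nonneg by (intro mult_left_mono) auto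
    finally show ?thesis
      by (simp add: power_mult_distrib mult_ac)
  qed
  moreover have "(\<lambda>n. (kap * K) ^ n * (kap * K * c * exp (- lam * t))) \<longlonglongrightarrow> 0"
    using kap_nonneg K_nonneg kap_K_less_1 by (intro tendsto_mult_left_zero[OF LIMSEQ_power_zero]) simp
  ultimately have "(\<lambda>n. a (Suc n)) \<longlonglongrightarrow> 0"
    by (rule Lim_null_comparison[OF always_eventually[OF allI]])
  then have "(\<lambda>n. a n - a (Suc n)) sums (a 0 - 0)"
    by (rule telescope_sums'[OF LIMSEQ_imp_Suc])
  moreover have "kap ^ n * (L ^^ n) (\<lambda>u. k u - kap * L k u) t = a n - a (Suc n)" for n
    unfolding funpow_L_one_minus_kap_L[OF k t] a_def by (simp add: algebra_simps)
  ultimately show ?thesis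
    by (simp add: neumann_sum_def a_def sums_iff)
qed

lemma bounded_invertible_one_minus_kap_L: "bounded_invertible_on lam (\<lambda>k t. k t - kap * L k t)"
  unfolding bounded_invertible_on_def
proof (intro conjI exI ballI impI)
  fix k assume "k \<in> Linf lam"
  then obtain c where c: "wnorm lam k = ereal c" "wbounded lam k c"
    by (elim Linf_wboundedE)
  have "wbounded lam (\<lambda>t. k t - kap * L k t) ((1 + kap * K) * c)"
    using wbounded_diff[OF c(2) wbounded_scale[OF wbounded_L[OF c(2)], of kap]] kap_nonneg
    by (simp add: algebra_simps)
  then show "(\<lambda>t. k t - kap * L k t) \<in> Linf lam"
    and "wnorm lam (\<lambda>t. k t - kap * L k t) \<le> ereal (1 + kap * K) * wnorm lam k"
    using wbounded_imp_Linf wnorm_le_wbounded c(1) by auto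
  show "ae_eq (neumann_sum (\<lambda>t. k t - kap * L k t)) k"
    unfolding ae_eq_def by (rule AE_I2) (simp add: space_halfline neumann_sum_left_inverse[OF c(2)])
next
  fix h assume "h \<in> Linf lam"
  then obtain c where c: "wnorm lam h = ereal c" "wbounded lam h c"
    by (elim Linf_wboundedE)
  have "wbounded lam (neumann_sum h) (1 / (1 - kap * K) * c)"
    using wbounded_neumann_sum[OF c(2)] by simp
  then show "neumann_sum h \<in> Linf lam"
    and "wnorm lam (neumann_sum h) \<le> ereal (1 / (1 - kap * K)) * wnorm lam h"
    using wbounded_imp_Linf wnorm_le_wbounded c(1) by auto
  show "ae_eq (\<lambda>t. neumann_sum h t - kap * L (neumann_sum h) t) h"
    unfolding ae_eq_def by (rule AE_I2) (simp add: space_halfline neumann_sum_right_inverse[OF c(2)])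
next
  fix h1 h2 assume h: "h1 \<in> Linf lam" "h2 \<in> Linf lam" "ae_eq h1 h2"
  obtain c1 c2 where "wbounded lam h1 c1" "wbounded lam h2 c2"
    using Linf_wboundedE[OF h(1)] Linf_wboundedE[OF h(2)] by metis
  with h(3) show "ae_eq (neumann_sum h1) (neumann_sum h2)"
    unfolding ae_eq_def by (rule neumann_sum_ae_cong[rotated 2])
qed

end

section \<open>The operator L\<close>

lemma set_integral_abs_le_dominated:
  fixes f h :: "'a \<Rightarrow> real"
  assumes h: "set_integrable M A h" and f: "set_borel_measurable M A f"
    and le: "AE x in M. x \<in> A \<longrightarrow> \<bar>f x\<bar> \<le> h x"
  shows "set_integrable M A f" and "\<bar>LINT x:A|M. f x\<bar> \<le> (LINT x:A|M. h x)"
proof -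
  show f_int: "set_integrable M A f"
    by (rule set_integrable_bound[OF h f]) (use le in \<open>auto elim: eventually_mono\<close>)
  have "\<bar>LINT x:A|M. f x\<bar> \<le> (LINT x:A|M. \<bar>f x\<bar>)"
    using set_integral_norm_bound[OF f_int] by simp
  also have "\<dots> \<le> (LINT x:A|M. h x)"
    by (rule set_integral_mono_AE[OF set_integrable_abs[OF f_int] h le])
  finally show "\<bar>LINT x:A|M. f x\<bar> \<le> (LINT x:A|M. h x)" .
qed

lemma set_integral_exp_atLeast:
  fixes b c :: real
  assumes "0 < b"
  shows "set_integrable lborel {c..} (\<lambda>u. exp (- b * u))"
    and "(LINT u:{c..}|lborel. exp (- b * u)) = exp (- b * c) / b"
proof -
  have has_int: "((\<lambda>u. exp (- b * u)) has_integral exp (- b * c) / b) {c..}"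
    by (rule has_integral_exp_minus_to_infinity[OF assms])
  then have "(\<lambda>u. exp (- b * u)) absolutely_integrable_on {c..}"
    by (intro nonnegative_absolutely_integrable_1) (auto simp: integrable_on_def)
  then show int: "set_integrable lborel {c..} (\<lambda>u. exp (- b * u))"
    by (simp add: absolutely_integrable_on_def set_integrable_def integrable_completion[symmetric])
  show "(LINT u:{c..}|lborel. exp (- b * u)) = exp (- b * c) / b"
    using set_borel_integral_eq_integral(2)[OF int] has_int by (simp add: integral_unique)
qed

lemma set_integral_exp_atLeastAtMost:
  fixes b t :: real
  assumes "0 < b" "0 \<le> t"
  shows "(LINT u:{0..t}|lborel. exp (b * u)) = (exp (b * t) - 1) / b"
proof -
  have "(LBINT u=ereal 0..ereal t. exp (b * u)) = exp (b * t) / b - exp (b * 0) / b"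
    by (rule interval_integral_FTC_finite)
       (use assms in \<open>auto intro!: continuous_intros derivative_eq_intros
          simp: has_real_derivative_iff_has_vector_derivative[symmetric]\<close>)
  then show ?thesis
    using assms by (simp add: interval_integral_Icc diff_divide_distrib)
qed

definition cos_transform :: "real measure \<Rightarrow> real \<Rightarrow> real" where
  "cos_transform g s = (LINT \<omega>|g. cos (\<omega> * s))"

lemma borel_measurable_cos_transform:
  assumes "prob_space g" "sets g = sets borel"
  shows "cos_transform g \<in> borel_measurable borel"
proof -
  interpret prob_space g by fact
  have "(\<lambda>(s, \<omega>). cos (\<omega> * s)) \<in> borel_measurable (borel \<Otimes>\<^sub>M (borel :: real measure))"
    by measurable
  then have "(\<lambda>(s, \<omega>). cos (\<omega> * s)) \<in> borel_measurable (borel \<Otimes>\<^sub>M g)"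
    by (subst measurable_cong_sets[OF sets_pair_measure_cong[OF refl assms(2)] refl])
  then show ?thesis
    unfolding cos_transform_def by (rule borel_measurable_lebesgue_integral)
qed

lemma abs_cos_transform_le_1:
  assumes "prob_space g" "sets g = sets borel"
  shows "\<bar>cos_transform g s\<bar> \<le> 1"
proof -
  interpret prob_space g by fact
  have meas: "(\<lambda>\<omega>. cos (\<omega> * s)) \<in> borel_measurable g"
    by (subst measurable_cong_sets[OF assms(2) refl]) measurable
  have "\<bar>cos_transform g s\<bar> \<le> (LINT \<omega>|g. 1)"
    unfolding cos_transform_def
    by (rule integral_abs_bound_integral) (auto intro: integrable_const_bound[where B=1] meas)
  then show ?thesis by (simp add: prob_space)
qed

definition Lop_integrand ::
    "real measure \<Rightarrow> real \<Rightarrow> real \<Rightarrow> (real \<Rightarrow> real) \<Rightarrow> real \<Rightarrow> real \<Rightarrow> real \<Rightarrow> real" where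
  "Lop_integrand g sig gam k t \<theta> u =
     exp (- (sig\<^sup>2 / 2) * (t - \<theta>)) * exp (- gam * (u - \<theta>)) * (k u * cos_transform g (t - u))"

lemma Lop_eq_integrand:
  "Lop g sig gam k t =
     1/2 * (LINT \<theta>:{0..t}|lborel. LINT u:{\<theta>..}|lborel. Lop_integrand g sig gam k t \<theta> u)"
  unfolding Lop_def Lop_integrand_def cos_transform_def by simp

lemma Lop_cong_nonneg:
  assumes "\<And>u. 0 \<le> u \<Longrightarrow> k1 u = k2 u" "0 \<le> t"
  shows "Lop g sig gam k1 t = Lop g sig gam k2 t"
  unfolding Lop_eq_integrand Lop_integrand_def
  by (intro arg_cong[where f = "\<lambda>x. 1/2 * x"] set_lebesgue_integral_cong ballI allI impI)
     (auto simp: assms)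

lemma Lop_scale: "Lop g sig gam (\<lambda>u. r * k u) t = r * Lop g sig gam k t"
  unfolding Lop_eq_integrand Lop_integrand_def by (simp add: ac_simps)

lemma borel_measurable_Lop_inner:
  assumes "prob_space g" "sets g = sets borel" and [measurable]: "k \<in> borel_measurable borel"
  shows "(\<lambda>(t, \<theta>). LINT u:{\<theta>..}|lborel. Lop_integrand g sig gam k t \<theta> u)
           \<in> borel_measurable (borel \<Otimes>\<^sub>M borel)"
proof -
  note borel_measurable_cos_transform[OF assms(1,2), measurable]
  have "(\<lambda>(x, u). indicator {snd x..} u *\<^sub>R Lop_integrand g sig gam k (fst x) (snd x) u)
      = (\<lambda>(x, u). if snd x \<le> u then Lop_integrand g sig gam k (fst x) (snd x) u else 0)"
    by (auto simp: fun_eq_iff indicator_def)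
  also have "\<dots> \<in> borel_measurable ((borel \<Otimes>\<^sub>M borel) \<Otimes>\<^sub>M lborel)"
    unfolding Lop_integrand_def by measurable
  finally have "(\<lambda>x. LINT u|lborel. indicator {snd x..} u *\<^sub>R Lop_integrand g sig gam k (fst x) (snd x) u)
      \<in> borel_measurable (borel \<Otimes>\<^sub>M borel)"
    by (rule lborel.borel_measurable_lebesgue_integral)
  then show ?thesis
    by (simp add: set_lebesgue_integral_def case_prod_beta)
qed

lemma borel_measurable_Lop:
  assumes "prob_space g" "sets g = sets borel" and "k \<in> borel_measurable borel"
  shows "Lop g sig gam k \<in> borel_measurable borel"
proof -
  note borel_measurable_Lop_inner[OF assms, measurable]
  have "(\<lambda>(t, \<theta>). indicator {0..t} \<theta> *\<^sub>R (LINT u:{\<theta>..}|lborel. Lop_integrand g sig gam k t \<theta> u))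
      = (\<lambda>x. if 0 \<le> snd x \<and> snd x \<le> fst x
              then (\<lambda>(t, \<theta>). LINT u:{\<theta>..}|lborel. Lop_integrand g sig gam k t \<theta> u) x else 0)"
    by (auto simp: fun_eq_iff indicator_def)
  also have "\<dots> \<in> borel_measurable (borel \<Otimes>\<^sub>M lborel)"
    by measurable
  finally have "(\<lambda>t. LINT \<theta>|lborel. indicator {0..t} \<theta> *\<^sub>R (LINT u:{\<theta>..}|lborel. Lop_integrand g sig gam k t \<theta> u))
      \<in> borel_measurable borel"
    by (rule lborel.borel_measurable_lebesgue_integral)
  then show ?thesis
    unfolding Lop_eq_integrand set_lebesgue_integral_def[of _ "{0.._}"] by simp
qed

lemma Lop_inner_estimate:
  assumes g: "prob_space g" "sets g = sets borel" and gl: "0 < gam + lam"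
    and k: "k \<in> borel_measurable borel" "AE u in lborel. 0 \<le> u \<longrightarrow> \<bar>k u\<bar> \<le> c * exp (- lam * u)"
    and \<theta>: "0 \<le> \<theta>"
  shows "set_integrable lborel {\<theta>..} (Lop_integrand g sig gam k t \<theta>)"
    and "\<bar>LINT u:{\<theta>..}|lborel. Lop_integrand g sig gam k t \<theta> u\<bar>
           \<le> c * exp (- (sig\<^sup>2 / 2) * (t - \<theta>)) * exp (- lam * \<theta>) / (gam + lam)"
proof -
  note borel_measurable_cos_transform[OF g, measurable] k(1)[measurable]
  define C where "C = c * exp (- (sig\<^sup>2 / 2) * (t - \<theta>)) * exp (gam * \<theta>)"
  have dom_int: "set_integrable lborel {\<theta>..} (\<lambda>u. C * exp (- (gam + lam) * u))"
    using set_integral_exp_atLeast(1)[OF gl] by (rule set_integrable_mult_right)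
  have meas: "set_borel_measurable lborel {\<theta>..} (Lop_integrand g sig gam k t \<theta>)"
    unfolding set_borel_measurable_def Lop_integrand_def by measurable
  have dom: "AE u in lborel. u \<in> {\<theta>..} \<longrightarrow> \<bar>Lop_integrand g sig gam k t \<theta> u\<bar> \<le> C * exp (- (gam + lam) * u)"
    using k(2)
  proof eventually_elim
    case (elim u)
    show ?case
    proof
      assume "u \<in> {\<theta>..}"
      then have "\<bar>k u\<bar> \<le> c * exp (- lam * u)"
        using elim \<theta> by auto
      then have "\<bar>k u * cos_transform g (t - u)\<bar> \<le> c * exp (- lam * u)"
        using abs_cos_transform_le_1[OF g, of "t - u"]
        by (simp add: abs_mult) (meson abs_ge_zero mult_left_le order_trans)
      then have "\<bar>Lop_integrand g sig gam k t \<theta> u\<bar>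
          \<le> exp (- (sig\<^sup>2 / 2) * (t - \<theta>)) * exp (- gam * (u - \<theta>)) * (c * exp (- lam * u))"
        unfolding Lop_integrand_def by (simp add: abs_mult mult_left_mono)
      also have "\<dots> = C * exp (- (gam + lam) * u)"
        unfolding C_def by (simp add: algebra_simps flip: exp_add)
      finally show "\<bar>Lop_integrand g sig gam k t \<theta> u\<bar> \<le> C * exp (- (gam + lam) * u)" .
    qed
  qed
  show "set_integrable lborel {\<theta>..} (Lop_integrand g sig gam k t \<theta>)"
    by (rule set_integral_abs_le_dominated(1)[OF dom_int meas dom])
  have "\<bar>LINT u:{\<theta>..}|lborel. Lop_integrand g sig gam k t \<theta> u\<bar>
      \<le> (LINT u:{\<theta>..}|lborel. C * exp (- (gam + lam) * u))"
    by (rule set_integral_abs_le_dominated(2)[OF dom_int meas dom])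
  also have "\<dots> = C * (exp (- (gam + lam) * \<theta>) / (gam + lam))"
    using set_integral_exp_atLeast(2)[OF gl, of \<theta>] by (simp add: set_integral_mult_right)
  also have "\<dots> = c * exp (- (sig\<^sup>2 / 2) * (t - \<theta>)) * exp (- lam * \<theta>) / (gam + lam)"
    unfolding C_def by (simp add: algebra_simps flip: exp_add)
  finally show "\<bar>LINT u:{\<theta>..}|lborel. Lop_integrand g sig gam k t \<theta> u\<bar>
      \<le> c * exp (- (sig\<^sup>2 / 2) * (t - \<theta>)) * exp (- lam * \<theta>) / (gam + lam)" .
qed

lemma Lop_outer_estimate:
  assumes g: "prob_space g" "sets g = sets borel" and gl: "0 < gam + lam"
    and k: "k \<in> borel_measurable borel" "AE u in lborel. 0 \<le> u \<longrightarrow> \<bar>k u\<bar> \<le> c * exp (- lam * u)"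
  shows "set_integrable lborel {0..t} (\<lambda>\<theta>. LINT u:{\<theta>..}|lborel. Lop_integrand g sig gam k t \<theta> u)"
    and "\<bar>Lop g sig gam k t\<bar>
           \<le> c / (gam + lam) * exp (- (sig\<^sup>2 / 2) * t)
               * (LINT \<theta>:{0..t}|lborel. exp ((sig\<^sup>2 / 2 - lam) * \<theta>)) / 2"
proof -
  define D where "D = c / (gam + lam) * exp (- (sig\<^sup>2 / 2) * t)"
  have dom_int: "set_integrable lborel {0..t} (\<lambda>\<theta>. D * exp ((sig\<^sup>2 / 2 - lam) * \<theta>))"
    by (intro borel_integrable_atLeastAtMost' continuous_intros)
  have "(\<lambda>\<theta>. LINT u:{\<theta>..}|lborel. Lop_integrand g sig gam k t \<theta> u) \<in> borel_measurable borel"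
    using measurable_Pair2[OF borel_measurable_Lop_inner[OF g k(1)], of t] by simp
  then have meas: "set_borel_measurable lborel {0..t} (\<lambda>\<theta>. LINT u:{\<theta>..}|lborel. Lop_integrand g sig gam k t \<theta> u)"
    unfolding set_borel_measurable_def by measurable
  have dom: "AE \<theta> in lborel. \<theta> \<in> {0..t} \<longrightarrow>
      \<bar>LINT u:{\<theta>..}|lborel. Lop_integrand g sig gam k t \<theta> u\<bar> \<le> D * exp ((sig\<^sup>2 / 2 - lam) * \<theta>)"
  proof (intro AE_I2 impI)
    fix \<theta> :: real assume "\<theta> \<in> {0..t}"
    then have "\<bar>LINT u:{\<theta>..}|lborel. Lop_integrand g sig gam k t \<theta> u\<bar>
        \<le> c * exp (- (sig\<^sup>2 / 2) * (t - \<theta>)) * exp (- lam * \<theta>) / (gam + lam)"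
      by (intro Lop_inner_estimate(2)[OF g gl k]) simp
    also have "\<dots> = D * exp ((sig\<^sup>2 / 2 - lam) * \<theta>)"
      unfolding D_def by (simp add: field_simps flip: exp_add)
    finally show "\<bar>LINT u:{\<theta>..}|lborel. Lop_integrand g sig gam k t \<theta> u\<bar> \<le> D * exp ((sig\<^sup>2 / 2 - lam) * \<theta>)" .
  qed
  show "set_integrable lborel {0..t} (\<lambda>\<theta>. LINT u:{\<theta>..}|lborel. Lop_integrand g sig gam k t \<theta> u)"
    by (rule set_integral_abs_le_dominated(1)[OF dom_int meas dom])
  have "\<bar>LINT \<theta>:{0..t}|lborel. LINT u:{\<theta>..}|lborel. Lop_integrand g sig gam k t \<theta> u\<bar>
      \<le> D * (LINT \<theta>:{0..t}|lborel. exp ((sig\<^sup>2 / 2 - lam) * \<theta>))"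
    using set_integral_abs_le_dominated(2)[OF dom_int meas dom] by (simp add: set_integral_mult_right)
  then show "\<bar>Lop g sig gam k t\<bar>
      \<le> c / (gam + lam) * exp (- (sig\<^sup>2 / 2) * t) * (LINT \<theta>:{0..t}|lborel. exp ((sig\<^sup>2 / 2 - lam) * \<theta>)) / 2"
    unfolding Lop_eq_integrand D_def[symmetric] by (simp add: abs_mult)
qed

lemma abs_Lop_le:
  assumes g: "prob_space g" "sets g = sets borel" and gl: "0 < gam + lam" and lam: "lam < sig\<^sup>2 / 2"
    and k: "k \<in> borel_measurable borel" "AE u in lborel. 0 \<le> u \<longrightarrow> \<bar>k u\<bar> \<le> c * exp (- lam * u)"
    and c: "0 \<le> c" and t: "0 \<le> t"
  shows "\<bar>Lop g sig gam k t\<bar> \<le> c * exp (- lam * t) / ((gam + lam) * (sig\<^sup>2 - 2 * lam))"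
proof -
  define a where "a = sig\<^sup>2 / 2 - lam"
  define E where "E = c / (gam + lam) * exp (- (sig\<^sup>2 / 2) * t)"
  have a: "0 < a" using lam by (simp add: a_def)
  have E: "0 \<le> E" using c gl by (simp add: E_def)
  have "\<bar>Lop g sig gam k t\<bar> \<le> E * (LINT \<theta>:{0..t}|lborel. exp (a * \<theta>)) / 2"
    using Lop_outer_estimate(2)[OF g gl k, where sig = sig and t = t] unfolding E_def a_def .
  also have "\<dots> = E * ((exp (a * t) - 1) / a) / 2"
    by (simp add: set_integral_exp_atLeastAtMost[OF a t])
  also have "\<dots> \<le> E * (exp (a * t) / a) / 2"
    using a E by (intro divide_right_mono mult_left_mono) auto
  also have "\<dots> = c * (exp (- (sig\<^sup>2 / 2) * t) * exp (a * t)) / ((gam + lam) * (2 * a))"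
    using gl a unfolding E_def by (simp add: field_simps)
  also have "\<dots> = c * exp (- lam * t) / ((gam + lam) * (sig\<^sup>2 - 2 * lam))"
    unfolding a_def by (simp add: algebra_simps flip: exp_add)
  finally show ?thesis .
qed

lemma Lop_add:
  assumes g: "prob_space g" "sets g = sets borel" and gl: "0 < gam + lam"
    and k1: "k1 \<in> borel_measurable borel" "AE u in lborel. 0 \<le> u \<longrightarrow> \<bar>k1 u\<bar> \<le> c1 * exp (- lam * u)"
    and k2: "k2 \<in> borel_measurable borel" "AE u in lborel. 0 \<le> u \<longrightarrow> \<bar>k2 u\<bar> \<le> c2 * exp (- lam * u)"
  shows "Lop g sig gam (\<lambda>u. k1 u + k2 u) t = Lop g sig gam k1 t + Lop g sig gam k2 t"
proof -
  have integrand_add: "Lop_integrand g sig gam (\<lambda>u. k1 u + k2 u) t \<theta> u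
      = Lop_integrand g sig gam k1 t \<theta> u + Lop_integrand g sig gam k2 t \<theta> u" for \<theta> u
    unfolding Lop_integrand_def by (simp add: algebra_simps)
  have inner_add: "(LINT u:{\<theta>..}|lborel. Lop_integrand g sig gam (\<lambda>u. k1 u + k2 u) t \<theta> u)
      = (LINT u:{\<theta>..}|lborel. Lop_integrand g sig gam k1 t \<theta> u)
        + (LINT u:{\<theta>..}|lborel. Lop_integrand g sig gam k2 t \<theta> u)" if "0 \<le> \<theta>" for \<theta>
    unfolding integrand_add
    by (rule set_integral_add(2)[OF Lop_inner_estimate(1)[OF g gl k1 that] Lop_inner_estimate(1)[OF g gl k2 that]])
  have "(LINT \<theta>:{0..t}|lborel. LINT u:{\<theta>..}|lborel. Lop_integrand g sig gam (\<lambda>u. k1 u + k2 u) t \<theta> u)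
      = (LINT \<theta>:{0..t}|lborel. (LINT u:{\<theta>..}|lborel. Lop_integrand g sig gam k1 t \<theta> u)
                               + (LINT u:{\<theta>..}|lborel. Lop_integrand g sig gam k2 t \<theta> u))"
    by (rule set_lebesgue_integral_cong) (auto simp: inner_add)
  also have "\<dots> = (LINT \<theta>:{0..t}|lborel. LINT u:{\<theta>..}|lborel. Lop_integrand g sig gam k1 t \<theta> u)
                + (LINT \<theta>:{0..t}|lborel. LINT u:{\<theta>..}|lborel. Lop_integrand g sig gam k2 t \<theta> u)"
    by (rule set_integral_add(2)[OF Lop_outer_estimate(1)[OF g gl k1] Lop_outer_estimate(1)[OF g gl k2]])
  finally show ?thesis
    unfolding Lop_eq_integrand by (simp add: algebra_simps)
qed

(* Elements of Linf are only measurable on the half line, while Lop integrates over lborel;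
   as Lop reads its argument only on [0, infinity), extending by zero is harmless. *)
definition zero_extension :: "(real \<Rightarrow> real) \<Rightarrow> real \<Rightarrow> real" where
  "zero_extension k t = indicator {0..} t * k t"

lemma borel_measurable_zero_extension:
  "k \<in> borel_measurable halfline \<Longrightarrow> zero_extension k \<in> borel_measurable borel"
  unfolding halfline_def zero_extension_def[abs_def]
  by (subst (asm) borel_measurable_restrict_space_iff) auto

lemma zero_extension_bound:
  assumes "wbounded lam k c"
  shows "AE u in lborel. 0 \<le> u \<longrightarrow> \<bar>zero_extension k u\<bar> \<le> c * exp (- lam * u)"
  using assms unfolding wbounded_def AE_halfline_iff
  by (auto simp: zero_extension_def times_exp_le_iff elim!: eventually_mono)

lemma Lop_zero_extension: "0 \<le> t \<Longrightarrow> Lop g sig gam (zero_extension k) t = Lop g sig gam k t"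
  by (rule Lop_cong_nonneg) (simp_all add: zero_extension_def)

lemma Lop_add_wbounded:
  assumes g: "prob_space g" "sets g = sets borel" and gl: "0 < gam + lam"
    and k1: "wbounded lam k1 c1" and k2: "wbounded lam k2 c2" and t: "0 \<le> t"
  shows "Lop g sig gam (\<lambda>u. k1 u + k2 u) t = Lop g sig gam k1 t + Lop g sig gam k2 t"
proof -
  have "zero_extension (\<lambda>u. k1 u + k2 u) = (\<lambda>u. zero_extension k1 u + zero_extension k2 u)"
    by (simp add: zero_extension_def fun_eq_iff algebra_simps)
  moreover have "Lop g sig gam (\<lambda>u. zero_extension k1 u + zero_extension k2 u) t
      = Lop g sig gam (zero_extension k1) t + Lop g sig gam (zero_extension k2) t"
    using k1 k2 unfolding wbounded_def
    by (intro Lop_add[OF g gl _ zero_extension_bound[OF k1] _ zero_extension_bound[OF k2]]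
        borel_measurable_zero_extension) auto
  ultimately show ?thesis
    using Lop_zero_extension[OF t] by metis
qed

lemma abs_Lop_wbounded_le:
  assumes g: "prob_space g" "sets g = sets borel" and gl: "0 < gam + lam" and lam: "lam < sig\<^sup>2 / 2"
    and k: "wbounded lam k c" and t: "0 \<le> t"
  shows "\<bar>Lop g sig gam k t\<bar> * exp (lam * t) \<le> 1 / ((gam + lam) * (sig\<^sup>2 - 2 * lam)) * c"
proof -
  have "\<bar>Lop g sig gam (zero_extension k) t\<bar> \<le> c * exp (- lam * t) / ((gam + lam) * (sig\<^sup>2 - 2 * lam))"
    using k unfolding wbounded_def
    by (intro abs_Lop_le[OF g gl lam] borel_measurable_zero_extension zero_extension_bound
        wbounded_nonneg[OF k] k t) auto
  then show ?thesis
    by (simp add: Lop_zero_extension[OF t] times_exp_le_iff)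
qed

lemma borel_measurable_halfline_Lop:
  assumes g: "prob_space g" "sets g = sets borel" and k: "k \<in> borel_measurable halfline"
  shows "Lop g sig gam k \<in> borel_measurable halfline"
proof -
  have "Lop g sig gam (zero_extension k) \<in> borel_measurable borel"
    by (intro borel_measurable_Lop[OF g] borel_measurable_zero_extension k)
  then have "Lop g sig gam (zero_extension k) \<in> borel_measurable halfline"
    unfolding halfline_def by (intro measurable_restrict_space1) simp
  then show ?thesis
    by (rule measurable_cong[THEN iffD1, rotated]) (simp add: space_halfline Lop_zero_extension)
qed

lemma Lop_weighted_bounded_operator:
  assumes g: "prob_space g" "sets g = sets borel" and gl: "0 < gam + lam" and lam: "lam < sig\<^sup>2 / 2"
  shows "weighted_bounded_operator lam (1 / ((gam + lam) * (sig\<^sup>2 - 2 * lam))) (Lop g sig gam)"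
proof
  show "0 \<le> 1 / ((gam + lam) * (sig\<^sup>2 - 2 * lam))"
    using gl lam by simp
  show "Lop g sig gam k1 t = Lop g sig gam k2 t" if "\<And>u. 0 \<le> u \<Longrightarrow> k1 u = k2 u" "0 \<le> t" for k1 k2 t
    using that by (rule Lop_cong_nonneg)
  show "Lop g sig gam (\<lambda>u. r * k u) t = r * Lop g sig gam k t" for t r k
    by (rule Lop_scale)
  show "Lop g sig gam (\<lambda>u. k1 u + k2 u) t = Lop g sig gam k1 t + Lop g sig gam k2 t"
    if "wbounded lam k1 c1" "wbounded lam k2 c2" "0 \<le> t" for k1 c1 k2 c2 t
    using that by (rule Lop_add_wbounded[OF g gl])
  show "\<bar>Lop g sig gam k t\<bar> * exp (lam * t) \<le> 1 / ((gam + lam) * (sig\<^sup>2 - 2 * lam)) * c"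
    if "wbounded lam k c" "0 \<le> t" for k c t
    using that by (rule abs_Lop_wbounded_le[OF g gl lam])
  show "Lop g sig gam k \<in> borel_measurable halfline" if "wbounded lam k c" for k c
    using that unfolding wbounded_def by (intro borel_measurable_halfline_Lop[OF g]) simp
qed

lemma Lnorm_le:
  assumes "prob_space g" "sets g = sets borel" "0 < gam + lam" "lam < sig\<^sup>2 / 2"
  shows "Lnorm g sig gam lam \<le> ereal (1 / ((gam + lam) * (sig\<^sup>2 - 2 * lam)))"
proof -
  interpret weighted_bounded_operator lam "1 / ((gam + lam) * (sig\<^sup>2 - 2 * lam))" "Lop g sig gam"
    by (rule Lop_weighted_bounded_operator[OF assms])
  show ?thesis
    unfolding Lnorm_def by (rule opnorm_L_le)
qed

lemma bounded_invertible_one_minus_kap_Lop: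
  assumes "prob_space g" "sets g = sets borel" "0 < gam + lam" "lam < sig\<^sup>2 / 2"
    and "0 \<le> kap" "kap < (gam + lam) * (sig\<^sup>2 - 2 * lam)"
  shows "bounded_invertible_on lam (\<lambda>k t. k t - kap * Lop g sig gam k t)"
proof -
  interpret weighted_bounded_operator lam "1 / ((gam + lam) * (sig\<^sup>2 - 2 * lam))" "Lop g sig gam"
    by (rule Lop_weighted_bounded_operator[OF assms(1-4)])
  interpret neumann_series lam "1 / ((gam + lam) * (sig\<^sup>2 - 2 * lam))" "Lop g sig gam" kap
    using assms(3-6) by unfold_locales (simp_all add: field_simps)
  show ?thesis
    by (rule bounded_invertible_one_minus_kap_L)
qed

lemma exists_weight_below_limit:
  fixes \<gamma> \<sigma> \<kappa> :: real
  assumes "0 < \<sigma>" "\<kappa> < \<gamma> * \<sigma>\<^sup>2"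
  obtains lam where "0 < lam" "lam < \<sigma>\<^sup>2 / 2" "\<kappa> < (\<gamma> + lam) * (\<sigma>\<^sup>2 - 2 * lam)"
proof -
  have "((\<lambda>lam. (\<gamma> + lam) * (\<sigma>\<^sup>2 - 2 * lam)) \<longlongrightarrow> (\<gamma> + 0) * (\<sigma>\<^sup>2 - 2 * 0)) (at_right 0)"
    by (intro tendsto_intros)
  then have "\<forall>\<^sub>F lam in at_right 0. \<kappa> < (\<gamma> + lam) * (\<sigma>\<^sup>2 - 2 * lam)"
    using assms(2) by (simp add: order_tendsto_iff)
  moreover have "\<forall>\<^sub>F lam in at_right 0. lam < \<sigma>\<^sup>2 / 2"
    using assms(1) by (intro order_tendstoD(2)[OF tendsto_ident_at]) simp
  ultimately have "\<forall>\<^sub>F lam in at_right 0. 0 < lam \<and> lam < \<sigma>\<^sup>2 / 2 \<and> \<kappa> < (\<gamma> + lam) * (\<sigma>\<^sup>2 - 2 * lam)"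
    using eventually_at_right_less by eventually_elim auto
  then show ?thesis
    using eventually_happens'[OF trivial_limit_at_right_real[unfolded eventually_False]] that by blast
qed

theorem lemma4p2:
  fixes g :: "real measure" and \<beta> \<sigma> \<gamma> :: real
  assumes "prob_space g" and "sets g = sets borel"
    and "\<And>A. A \<in> sets borel \<Longrightarrow> emeasure g (uminus ` A) = emeasure g A"
    and "\<beta> > 0" and "\<sigma> > 0" and "\<gamma> = \<beta> + \<sigma>\<^sup>2 / 2"
  shows "(\<forall>lam. 0 < lam \<and> lam < \<sigma>\<^sup>2 / 2 \<longrightarrow>
            Lnorm g \<sigma> \<gamma> lam \<le> ereal (1 / ((\<gamma> + lam) * (\<sigma>\<^sup>2 - 2 * lam))))
       \<and> (\<forall>\<kappa>::real. 0 \<le> \<kappa> \<and> \<kappa> < \<gamma> * \<sigma>\<^sup>2 \<longrightarrow>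
            (\<exists>lam>0. bounded_invertible_on lam (\<lambda>k t. k t - \<kappa> * Lop g \<sigma> \<gamma> k t)))"
proof -
  have \<gamma>: "0 < \<gamma>"
    using assms(4,6) by (simp add: add_pos_nonneg)
  show ?thesis
  proof (intro conjI allI impI)
    fix lam assume "0 < lam \<and> lam < \<sigma>\<^sup>2 / 2"
    then show "Lnorm g \<sigma> \<gamma> lam \<le> ereal (1 / ((\<gamma> + lam) * (\<sigma>\<^sup>2 - 2 * lam)))"
      using \<gamma> by (intro Lnorm_le assms(1,2)) auto
  next
    fix \<kappa> :: real assume \<kappa>: "0 \<le> \<kappa> \<and> \<kappa> < \<gamma> * \<sigma>\<^sup>2"
    then obtain lam where lam: "0 < lam" "lam < \<sigma>\<^sup>2 / 2" "\<kappa> < (\<gamma> + lam) * (\<sigma>\<^sup>2 - 2 * lam)"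
      using exists_weight_below_limit[OF assms(5)] by blast
    then have "bounded_invertible_on lam (\<lambda>k t. k t - \<kappa> * Lop g \<sigma> \<gamma> k t)"
      using \<gamma> \<kappa> by (intro bounded_invertible_one_minus_kap_Lop assms(1,2)) auto
    with lam(1) show "\<exists>lam>0. bounded_invertible_on lam (\<lambda>k t. k t - \<kappa> * Lop g \<sigma> \<gamma> k t)"
      by blast
  qed
qed

end
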